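(* Let $n_\text{in}\ge1$, $n_\text{out}=2$, $\mathbf{W}\in\mathbb{R}^{2\times n_\text{in}}$, $\mathbf{b}\in\mathbb{R}^{2}$, $\mathbf{c}\in\mathbb{R}^{n_\text{in}}$, $\mathbf{U}=[\mathbf{u}_1\,\ldots\,\mathbf{u}_{n_\text{in}}]\in\mathbb{R}^{n_\text{in}\times n_\text{in}}$, and $r\in[0,1]$. Let $\mathcal{P}(\mathbf{U})=\{\mathbf{c}+\sum_j\lambda_j\mathbf{u}_j:\lambda\in[0,1]^{n_\text{in}}\}$, $\mathcal{P}(\mathbf{U}^L)=\{\mathbf{c}+\lambda_1 r\mathbf{u}_1+\sum_{j\ge2}\lambda_j\mathbf{u}_j:\lambda\in[0,1]^{n_\text{in}}\}$, $\mathcal{P}(\mathbf{U}^R)=\{\mathbf{c}+r\mathbf{u}_1+\lambda_1(1-r)\mathbf{u}_1+\sum_{j\ge2}\lambda_j\mathbf{u}_j:\lambda\in[0,1]^{n_\text{in}}\}$, and let $\mathcal{P}(\mathbf{V}),\mathcal{P}(\mathbf{V}^L),\mathcal{P}(\mathbf{V}^R)$ be their respective images under $\mathbf{x}\mapsto\mathbf{W}\mathbf{x}+\mathbf{b}$. Let $\mathbf{v}_1=\mathbf{W}\mathbf{u}_1$ with coordinates $v_{1,1},v_{1,2}$. Then \[ \mathrm{Vol}(\mathcal{B}(\mathbf{V}))-\mathrm{Vol}\big(\mathcal{B}(\mathbf{V}^L)\cup\mathcal{B}(\mathbf{V}^R)\big)=2r(1-r)\,|v_{1,1}|\,|v_{1,2}|.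 \]
   Context: For a parallelotope $\mathcal{P}\subset\mathbb{R}^{n_\text{out}}$, $\mathcal{B}(\cdot)$ denotes the smallest axis-aligned hyperrectangle containing it (the Cartesian product over coordinates of the interval between the minimal and maximal coordinate of its vertices); $\mathrm{Vol}$ is Lebesgue area/volume. *)

theory Defs
  imports "HOL-Analysis.Analysis"
begin

definition parallelotope :: "real^'m \<Rightarrow> ('n::finite \<Rightarrow> real^'m) \<Rightarrow> (real^'m) set" where
  "parallelotope c u = {c + (\<Sum>j\<in>UNIV. l j *\<^sub>R u j) | l. \<forall>j. 0 \<le> l j \<and> l j \<le> 1}"

definition bbox :: "(real^'m) set \<Rightarrow> (real^'m) set" where
  "bbox P = {y. \<forall>k. (INF x\<in>P. x $ k) \<le> y $ k \<and> y $ k \<le> (SUP x\<in>P. x $ k)}"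

definition affmap :: "real^'n^'m \<Rightarrow> real^'m \<Rightarrow> real^'n \<Rightarrow> real^'m" where
  "affmap W b x = W *v x + b"

end

(* In coordinate k the bounding box of d + sum_j l_j w_j (l in [0,1]^n) is an interval of
   length sum_j |w_j k|.  Cutting the edge w_i at ratio r yields two parallelotopes whose
   boxes have lengths r a_k + T_k and (1 - r) a_k + T_k, where a_k = |w_i k| and
   T_k = sum_{j ~= i} |w_j k|; whatever the signs, the two boxes overlap exactly in the box
   of the common face, of lengths T_k.  By inclusion-exclusion the volume lost is
   prod (a_k + T_k) - prod (r a_k + T_k) - prod ((1 - r) a_k + T_k) + prod T_k,
   which in the plane equals 2 r (1 - r) a_1 a_2. *)

theory Submission
  imports Defs
begin

lemma affmap_image_parallelotope:
  fixes W :: "real^'n^'m" and u :: "'k::finite \<Rightarrow> real^'n"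
  shows "affmap W b ` parallelotope c u = parallelotope (W *v c + b) (\<lambda>j. W *v u j)"
proof -
  have affmap_point: "affmap W b (c + (\<Sum>j\<in>UNIV. l j *\<^sub>R u j))
      = W *v c + b + (\<Sum>j\<in>UNIV. l j *\<^sub>R (W *v u j))" for l
    by (simp add: affmap_def matrix_vector_right_distrib
        linear_sum[OF matrix_vector_mul_linear] o_def algebra_simps)
  have "affmap W b ` parallelotope c u
      = {affmap W b (c + (\<Sum>j\<in>UNIV. l j *\<^sub>R u j)) | l. \<forall>j. 0 \<le> l j \<and> l j \<le> 1}"
    unfolding parallelotope_def by blast
  then show ?thesis
    unfolding affmap_point parallelotope_def .
qed

lemma component_parallelotope:
  fixes d :: "real^'m" and w :: "'k::finite \<Rightarrow> real^'m"
  shows "(\<lambda>x. x$k) ` parallelotope d w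
       = {d$k + (\<Sum>j\<in>UNIV. l j * w j $ k) | l. \<forall>j. 0 \<le> l j \<and> l j \<le> 1}"
proof -
  have "(\<lambda>x. x$k) ` parallelotope d w
      = {(d + (\<Sum>j\<in>UNIV. l j *\<^sub>R w j)) $ k | l. \<forall>j. 0 \<le> l j \<and> l j \<le> 1}"
    unfolding parallelotope_def by blast
  then show ?thesis by simp
qed

lemma Inf_component_parallelotope:
  fixes d :: "real^'m" and w :: "'k::finite \<Rightarrow> real^'m"
  shows "(INF x\<in>parallelotope d w. x$k) = d$k + (\<Sum>j\<in>UNIV. min 0 (w j $ k))"
  unfolding component_parallelotope
proof (rule cInf_eq_minimum)
  let ?l = "\<lambda>j. if w j $ k < 0 then 1 else 0 :: real"
  show "d$k + (\<Sum>j\<in>UNIV. min 0 (w j $ k))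
      \<in> {d$k + (\<Sum>j\<in>UNIV. l j * w j $ k) | l. \<forall>j. 0 \<le> l j \<and> l j \<le> 1}"
    by (rule CollectI, rule exI[of _ ?l]) (auto intro!: sum.cong)
next
  fix y
  assume "y \<in> {d$k + (\<Sum>j\<in>UNIV. l j * w j $ k) | l. \<forall>j. 0 \<le> l j \<and> l j \<le> 1}"
  then obtain l where y: "y = d$k + (\<Sum>j\<in>UNIV. l j * w j $ k)"
    and l: "\<forall>j. 0 \<le> l j \<and> l j \<le> 1"
    by blast
  have "min 0 (w j $ k) \<le> l j * w j $ k" for j
    using l[rule_format, of j] by (cases "w j $ k < 0") (auto intro: mult_left_le_one_le)
  then show "d$k + (\<Sum>j\<in>UNIV. min 0 (w j $ k)) \<le> y"
    unfolding y by (simp add: sum_mono)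
qed

lemma Sup_component_parallelotope:
  fixes d :: "real^'m" and w :: "'k::finite \<Rightarrow> real^'m"
  shows "(SUP x\<in>parallelotope d w. x$k) = d$k + (\<Sum>j\<in>UNIV. max 0 (w j $ k))"
  unfolding component_parallelotope
proof (rule cSup_eq_maximum)
  let ?l = "\<lambda>j. if w j $ k > 0 then 1 else 0 :: real"
  show "d$k + (\<Sum>j\<in>UNIV. max 0 (w j $ k))
      \<in> {d$k + (\<Sum>j\<in>UNIV. l j * w j $ k) | l. \<forall>j. 0 \<le> l j \<and> l j \<le> 1}"
    by (rule CollectI, rule exI[of _ ?l]) (auto intro!: sum.cong)
next
  fix y
  assume "y \<in> {d$k + (\<Sum>j\<in>UNIV. l j * w j $ k) | l. \<forall>j. 0 \<le> l j \<and> l j \<le> 1}"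
  then obtain l where y: "y = d$k + (\<Sum>j\<in>UNIV. l j * w j $ k)"
    and l: "\<forall>j. 0 \<le> l j \<and> l j \<le> 1"
    by blast
  have "l j * w j $ k \<le> max 0 (w j $ k)" for j
    using l[rule_format, of j]
    by (cases "w j $ k > 0") (auto intro: mult_left_le_one_le mult_nonneg_nonpos)
  then show "y \<le> d$k + (\<Sum>j\<in>UNIV. max 0 (w j $ k))"
    unfolding y by (simp add: sum_mono)
qed

lemma bbox_parallelotope:
  fixes d :: "real^'m" and w :: "'k::finite \<Rightarrow> real^'m"
  shows "bbox (parallelotope d w)
       = cbox (\<chi> k. d$k + (\<Sum>j\<in>UNIV. min 0 (w j $ k)))
              (\<chi> k. d$k + (\<Sum>j\<in>UNIV. max 0 (w j $ k)))"
  unfolding bbox_def Inf_component_parallelotope Sup_component_parallelotope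
  by (auto simp: mem_box_cart)

lemma lmeasurable_bbox_parallelotope:
  fixes d :: "real^'m" and w :: "'k::finite \<Rightarrow> real^'m"
  shows "bbox (parallelotope d w) \<in> lmeasurable"
  unfolding bbox_parallelotope by (rule lmeasurable_cbox)

lemma measure_cbox_cart:
  fixes a e :: "real^'m"
  assumes "\<And>k. a$k \<le> e$k"
  shows "measure lebesgue (cbox a e) = (\<Prod>k\<in>UNIV. e$k - a$k)"
proof -
  have "a \<in> cbox a e"
    using assms by (simp add: mem_box_cart)
  then have "measure lborel (cbox a e) = (\<Prod>k\<in>UNIV. e$k - a$k)"
    by (intro content_cbox_cart) blast
  then show ?thesis
    by simp
qed

lemma measure_bbox_parallelotope:
  fixes d :: "real^'m" and w :: "'k::finite \<Rightarrow> real^'m"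
  shows "measure lebesgue (bbox (parallelotope d w))
       = (\<Prod>k\<in>UNIV. \<Sum>j\<in>UNIV. \<bar>w j $ k\<bar>)"
proof -
  have "max 0 x - min 0 x = \<bar>x\<bar>" for x :: real
    by (simp add: abs_if)
  then have width: "(\<Sum>j\<in>UNIV. max 0 (w j $ k)) - (\<Sum>j\<in>UNIV. min 0 (w j $ k))
      = (\<Sum>j\<in>UNIV. \<bar>w j $ k\<bar>)" for k
    by (simp add: sum_subtractf[symmetric])
  have "(\<Sum>j\<in>UNIV. min 0 (w j $ k)) \<le> (\<Sum>j\<in>UNIV. max 0 (w j $ k))" for k
    by (intro sum_mono) simp
  then show ?thesis
    unfolding bbox_parallelotope by (subst measure_cbox_cart) (simp_all add: width)
qed

lemma sum_component_fun_upd: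
  fixes w :: "'k::finite \<Rightarrow> real^'m" and f :: "real \<Rightarrow> 'a::comm_monoid_add"
  shows "(\<Sum>j\<in>UNIV. f ((w(i := z)) j $ k))
       = f (z$k) + (\<Sum>j\<in>UNIV - {i}. f (w j $ k))"
  by (simp add: sum.remove[of UNIV i])

lemma measure_bbox_parallelotope_fun_upd:
  fixes d :: "real^'m" and w :: "'k::finite \<Rightarrow> real^'m"
  shows "measure lebesgue (bbox (parallelotope d (w(i := t *\<^sub>R w i))))
       = (\<Prod>k\<in>UNIV. \<bar>t\<bar> * \<bar>w i $ k\<bar> + (\<Sum>j\<in>UNIV - {i}. \<bar>w j $ k\<bar>))"
  unfolding measure_bbox_parallelotope sum_component_fun_upd by (simp add: abs_mult)

lemma bbox_parallelotope_split_Int: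
  fixes d :: "real^'m" and w :: "'k::finite \<Rightarrow> real^'m"
  assumes "0 \<le> r" "r \<le> 1"
  shows "bbox (parallelotope d (w(i := r *\<^sub>R w i)))
           \<inter> bbox (parallelotope (d + r *\<^sub>R w i) (w(i := (1 - r) *\<^sub>R w i)))
       = bbox (parallelotope (d + r *\<^sub>R w i) (w(i := 0)))"
proof -
  define lo where "lo = (\<chi> k. d$k + (\<Sum>j\<in>UNIV - {i}. min 0 (w j $ k)))"
  define hi where "hi = (\<chi> k. d$k + (\<Sum>j\<in>UNIV - {i}. max 0 (w j $ k)))"
  have bbox_upd: "bbox (parallelotope (d + t *\<^sub>R w i) (w(i := s *\<^sub>R w i)))
      = cbox (\<chi> k. lo$k + t * w i $ k + min 0 (s * w i $ k))
             (\<chi> k. hi$k + t * w i $ k + max 0 (s * w i $ k))" for t s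
    unfolding bbox_parallelotope sum_component_fun_upd lo_def hi_def
    by (simp add: algebra_simps)
  have lower: "max (lo$k + min 0 (r * w i $ k))
                   (lo$k + r * w i $ k + min 0 ((1 - r) * w i $ k)) = lo$k + r * w i $ k"
    and upper: "min (hi$k + max 0 (r * w i $ k))
                    (hi$k + r * w i $ k + max 0 ((1 - r) * w i $ k)) = hi$k + r * w i $ k"
    for k
    using assms mult_nonneg_nonneg[of r "w i $ k"] mult_nonneg_nonneg[of "1 - r" "w i $ k"]
      mult_nonneg_nonpos[of r "w i $ k"] mult_nonneg_nonpos[of "1 - r" "w i $ k"]
    by (cases "0 \<le> w i $ k"; simp add: max_def min_def)+
  show ?thesis
    using bbox_upd[of 0 r] bbox_upd[of r "1 - r"] bbox_upd[of r 0]
    by (simp add: Int_interval_cart interval_cbox_cart lower upper)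
qed

lemma measure_bbox_parallelotope_split:
  fixes d :: "real^'m" and w :: "'k::finite \<Rightarrow> real^'m" and i :: 'k
  assumes "0 \<le> r" "r \<le> 1"
  defines "T \<equiv> \<lambda>k. \<Sum>j\<in>UNIV - {i}. \<bar>w j $ k\<bar>"
  shows "measure lebesgue (bbox (parallelotope d w))
         - measure lebesgue (bbox (parallelotope d (w(i := r *\<^sub>R w i)))
             \<union> bbox (parallelotope (d + r *\<^sub>R w i) (w(i := (1 - r) *\<^sub>R w i))))
       = (\<Prod>k\<in>UNIV. \<bar>w i $ k\<bar> + T k) - (\<Prod>k\<in>UNIV. r * \<bar>w i $ k\<bar> + T k)
         - (\<Prod>k\<in>UNIV. (1 - r) * \<bar>w i $ k\<bar> + T k) + (\<Prod>k\<in>UNIV. T k)"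
proof -
  have vol: "measure lebesgue (bbox (parallelotope p (w(i := t *\<^sub>R w i))))
      = (\<Prod>k\<in>UNIV. \<bar>t\<bar> * \<bar>w i $ k\<bar> + T k)" for p t
    unfolding measure_bbox_parallelotope_fun_upd T_def ..
  have whole:
    "measure lebesgue (bbox (parallelotope d w)) = (\<Prod>k\<in>UNIV. \<bar>w i $ k\<bar> + T k)"
    unfolding measure_bbox_parallelotope T_def by (simp add: sum.remove[of UNIV i])
  let ?L = "bbox (parallelotope d (w(i := r *\<^sub>R w i)))"
  let ?R = "bbox (parallelotope (d + r *\<^sub>R w i) (w(i := (1 - r) *\<^sub>R w i)))"
  have union: "measure lebesgue (?L \<union> ?R)
      = measure lebesgue ?L + measure lebesgue ?R
        - measure lebesgue (bbox (parallelotope (d + r *\<^sub>R w i) (w(i := 0 *\<^sub>R w i))))"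
    unfolding measure_Un3[OF lmeasurable_bbox_parallelotope lmeasurable_bbox_parallelotope]
      bbox_parallelotope_split_Int[OF assms(1,2)] by simp
  show ?thesis
    unfolding whole union vol using assms(1,2) by simp
qed

theorem corollary1:
  fixes W :: "real^'n::finite^2" and b :: "real^2" and c :: "real^'n"
    and U :: "real^'n^'n" and r :: real and i1 :: 'n
  assumes "0 \<le> r" and "r \<le> 1"
  defines "u \<equiv> (\<lambda>j. column j U)"
  defines "PV \<equiv> affmap W b ` parallelotope c u"
  defines "PVL \<equiv> affmap W b ` parallelotope c (u(i1 := r *\<^sub>R u i1))"
  defines "PVR \<equiv> affmap W b ` parallelotope (c + r *\<^sub>R u i1) (u(i1 := (1 - r) *\<^sub>R u i1))"
  defines "v1 \<equiv> W *v u i1"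
  shows "measure lebesgue (bbox PV) - measure lebesgue (bbox PVL \<union> bbox PVR)
         = 2 * r * (1 - r) * \<bar>v1 $ 1\<bar> * \<bar>v1 $ 2\<bar>"
proof -
  define w where "w = (\<lambda>j. W *v u j)"
  define d where "d = W *v c + b"
  define T where "T = (\<lambda>k. \<Sum>j\<in>UNIV - {i1}. \<bar>w j $ k\<bar>)"
  have image_upd: "(\<lambda>j. W *v (u(i1 := t *\<^sub>R u i1)) j) = w(i1 := t *\<^sub>R w i1)" for t
    unfolding w_def by (auto simp: matrix_vector_mult_scaleR)
  have "PV = parallelotope d w"
    unfolding PV_def affmap_image_parallelotope d_def w_def ..
  moreover have "PVL = parallelotope d (w(i1 := r *\<^sub>R w i1))"
    unfolding PVL_def affmap_image_parallelotope image_upd d_def ..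
  moreover have "PVR = parallelotope (d + r *\<^sub>R w i1) (w(i1 := (1 - r) *\<^sub>R w i1))"
    unfolding PVR_def affmap_image_parallelotope image_upd d_def w_def
    by (simp add: matrix_vector_right_distrib matrix_vector_mult_scaleR algebra_simps)
  ultimately have "measure lebesgue (bbox PV) - measure lebesgue (bbox PVL \<union> bbox PVR)
      = (\<Prod>k\<in>UNIV. \<bar>v1 $ k\<bar> + T k) - (\<Prod>k\<in>UNIV. r * \<bar>v1 $ k\<bar> + T k)
        - (\<Prod>k\<in>UNIV. (1 - r) * \<bar>v1 $ k\<bar> + T k) + (\<Prod>k\<in>UNIV. T k)"
    using measure_bbox_parallelotope_split[OF assms(1,2), of d w i1]
    unfolding v1_def w_def T_def by simp
  also have "\<dots> = 2 * r * (1 - r) * \<bar>v1 $ 1\<bar> * \<bar>v1 $ 2\<bar>"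
    by (simp add: UNIV_2 algebra_simps)
  finally show ?thesis .
qed

end
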